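(* A fragment $F$ in the wait state which has a neighbor fragment $F'$ in the work state may enter the work state only after $F'$ has changed its state to the wait state.
   Context: A broadcast network is modeled as a connected graph G(V,E) with n nodes. In the fragment-level leader election algorithm, nodes are partitioned into fragments each with a candidate; id(F) = (size, candidate identity) ordered lexicographically; an external edge between F1 and F2 with id(F1) > id(F2) is outgoing for F1 and incoming for F2. Initially each node is a size-1 fragment in state wait. A fragment with an outgoing edge is in wait; a fragment in wait whose external edges are all incoming moves to work, where it counts its size new_size and compares with its maximal neighbor F'': if new_size > X · size(F'') (X > 1) it remains active, updates its size, makes all external edges outgoing and returns to wait; otherwise it joins F''. A fragment with no external edges is the leader. It has been shown that a fragment that was in work and remained active re-enters work only after each of its neighboring fragments has been in the work state. *)

theory Defs
  imports Main Complex_Main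
begin

text \<open>A configuration records,
  for every node, the candidate of its fragment (a fragment is identified by
  its candidate), and for every candidate the recorded fragment size and the
  fragment state.\<close>

datatype fstate = Wait | Work

record 'v config =
  cand   :: "'v \<Rightarrow> 'v"
  fsize  :: "'v \<Rightarrow> nat"
  fstate :: "'v \<Rightarrow> fstate"

definition connected_graph :: "'v set \<Rightarrow> ('v \<times> 'v) set \<Rightarrow> bool" where
  "connected_graph V E \<longleftrightarrow> finite V \<and> V \<noteq> {} \<and> E \<subseteq> V \<times> V \<and> sym E \<and> irrefl E
      \<and> (\<forall>u\<in>V. \<forall>v\<in>V. (u, v) \<in> E\<^sup>*)"

definition is_frag :: "'v set \<Rightarrow> 'v config \<Rightarrow> 'v \<Rightarrow> bool" where
  "is_frag V s c \<longleftrightarrow> c \<in> V \<and> cand s c = c"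

definition members :: "'v set \<Rightarrow> 'v config \<Rightarrow> 'v \<Rightarrow> 'v set" where
  "members V s c = {v \<in> V. cand s v = c}"

definition adj_frag :: "'v set \<Rightarrow> ('v \<times> 'v) set \<Rightarrow> 'v config \<Rightarrow> 'v \<Rightarrow> 'v \<Rightarrow> bool" where
  "adj_frag V E s c d \<longleftrightarrow> is_frag V s c \<and> is_frag V s d \<and> c \<noteq> d \<and>
      (\<exists>u v. (u, v) \<in> E \<and> cand s u = c \<and> cand s v = d)"

text \<open>id(F) = (size, candidate), ordered lexicographically; id_less s c d means id(c) < id(d).
  An external edge between c and d is outgoing for c iff id_less s d c, incoming for c iff id_less s c d.\<close>
definition id_less :: "'v::linorder config \<Rightarrow> 'v \<Rightarrow> 'v \<Rightarrow> bool" where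
  "id_less s c d \<longleftrightarrow> fsize s c < fsize s d \<or> (fsize s c = fsize s d \<and> c < d)"

definition initial :: "'v config \<Rightarrow> bool" where
  "initial s \<longleftrightarrow> (\<forall>v. cand s v = v \<and> fsize s v = 1 \<and> fstate s v = Wait)"

inductive step :: "'v set \<Rightarrow> ('v \<times> 'v) set \<Rightarrow> real \<Rightarrow> 'v::linorder config \<Rightarrow> 'v config \<Rightarrow> bool"
  for V E X where
  start_work:
    "\<lbrakk> is_frag V s c; fstate s c = Wait; \<exists>d. adj_frag V E s c d;
       \<forall>d. adj_frag V E s c d \<longrightarrow> id_less s c d \<rbrakk>
     \<Longrightarrow> step V E X s (s\<lparr>fstate := (fstate s)(c := Work)\<rparr>)"
| remain_active:
    "\<lbrakk> is_frag V s c; fstate s c = Work; adj_frag V E s c d;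
       \<forall>e. adj_frag V E s c e \<longrightarrow> e = d \<or> id_less s e d;
       real (card (members V s c)) > X * real (fsize s d) \<rbrakk>
     \<Longrightarrow> step V E X s (s\<lparr>fsize := (fsize s)(c := card (members V s c)),
                          fstate := (fstate s)(c := Wait)\<rparr>)"
| join:
    "\<lbrakk> is_frag V s c; fstate s c = Work; adj_frag V E s c d;
       \<forall>e. adj_frag V E s c e \<longrightarrow> e = d \<or> id_less s e d;
       \<not> (real (card (members V s c)) > X * real (fsize s d)) \<rbrakk>
     \<Longrightarrow> step V E X s (s\<lparr>cand := (\<lambda>v. if cand s v = c then d else cand s v)\<rparr>)"

end

theory Submission
  imports Defs
begin

text \<open>Along any run, every working fragment is smaller than all its neighbours, and all of
  them are waiting.  When the waiting fragment F moves to work at some time t, its neighbours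
  are therefore not working; the nodes of F' all lie in one fragment at time t (fragments only
  merge), and that fragment is either F itself or a neighbour of F, so it waits.  In particular
  t > i, since at time i that fragment is the working F'.\<close>

definition work_local_min :: "'v set \<Rightarrow> ('v \<times> 'v) set \<Rightarrow> 'v::linorder config \<Rightarrow> bool" where
  "work_local_min V E s \<longleftrightarrow> (\<forall>c d. fstate s c = Work \<and> adj_frag V E s c d
      \<longrightarrow> id_less s c d \<and> fstate s d = Wait)"

definition cand_retract :: "'v set \<Rightarrow> 'v config \<Rightarrow> bool" where
  "cand_retract V s \<longleftrightarrow> (\<forall>v\<in>V. cand s v \<in> V \<and> cand s (cand s v) = cand s v)"

lemma fstate_neq_iff [simp]: "x \<noteq> Work \<longleftrightarrow> x = Wait" "x \<noteq> Wait \<longleftrightarrow> x = Work"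
  by (cases x; simp)+

lemma adj_frag_sym: "sym E \<Longrightarrow> adj_frag V E s c d \<Longrightarrow> adj_frag V E s d c"
  unfolding adj_frag_def sym_def by blast

lemma id_less_asym: "id_less s c d \<Longrightarrow> \<not> id_less s d c"
  by (auto simp: id_less_def)

lemma adj_frag_cong: "cand s' = cand s \<Longrightarrow> adj_frag V E s' = adj_frag V E s"
  by (simp add: adj_frag_def is_frag_def fun_eq_iff)

lemma id_less_cong: "fsize s' = fsize s \<Longrightarrow> id_less s' = id_less s"
  by (simp add: id_less_def fun_eq_iff)

lemma neighbour_of_local_min_waits:
  assumes "work_local_min V E s" "sym E"
    and "\<forall>d. adj_frag V E s c d \<longrightarrow> id_less s c d" "adj_frag V E s c d"
  shows "fstate s d = Wait"
proof (rule ccontr)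
  assume "fstate s d \<noteq> Wait"
  with assms adj_frag_sym[OF assms(2,4)] have "id_less s d c"
    unfolding work_local_min_def by auto
  with assms show False
    using id_less_asym by blast
qed

lemma work_local_min_start_work:
  assumes inv: "work_local_min V E s" and "sym E"
    and c_min: "\<forall>d. adj_frag V E s c d \<longrightarrow> id_less s c d"
  shows "work_local_min V E (s\<lparr>fstate := (fstate s)(c := Work)\<rparr>)" (is "work_local_min V E ?s'")
proof -
  have adj_eq: "adj_frag V E ?s' = adj_frag V E s" and less_eq: "id_less ?s' = id_less s"
    by (rule adj_frag_cong, simp) (rule id_less_cong, simp)
  show ?thesis
    unfolding work_local_min_def adj_eq less_eq
  proof (intro allI impI, elim conjE)
    fix a d
    assume a_work: "fstate ?s' a = Work" and adj: "adj_frag V E s a d"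
    have a_d: "id_less s a d \<and> fstate s d = Wait"
    proof (cases "a = c")
      case True
      then show ?thesis
        using c_min adj neighbour_of_local_min_waits[OF inv \<open>sym E\<close> c_min] by auto
    next
      case False
      then show ?thesis
        using a_work adj inv unfolding work_local_min_def by auto
    qed
    moreover have "d \<noteq> c"
    proof
      assume "d = c"
      then have "fstate s a = Wait"
        using adj adj_frag_sym[OF \<open>sym E\<close>] neighbour_of_local_min_waits[OF inv \<open>sym E\<close> c_min]
        by blast
      with a_work a_d \<open>d = c\<close> show False
        by (auto simp: id_less_def split: if_splits)
    qed
    ultimately show "id_less s a d \<and> fstate ?s' d = Wait"
      by simp
  qed
qed

lemma work_local_min_remain_active:
  assumes inv: "work_local_min V E s" and c_work: "fstate s c = Work"
  shows "work_local_min V E (s\<lparr>fsize := (fsize s)(c := n), fstate := (fstate s)(c := Wait)\<rparr>)"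
    (is "work_local_min V E ?s'")
proof -
  have adj_eq: "adj_frag V E ?s' = adj_frag V E s"
    by (rule adj_frag_cong) simp
  show ?thesis
    unfolding work_local_min_def adj_eq
  proof (intro allI impI, elim conjE)
    fix a d
    assume a_work: "fstate ?s' a = Work" and adj: "adj_frag V E s a d"
    then have "a \<noteq> c" "id_less s a d \<and> fstate s d = Wait"
      using inv unfolding work_local_min_def by (auto split: if_splits)
    moreover have "d \<noteq> c"
      using c_work calculation by auto
    ultimately show "id_less ?s' a d \<and> fstate ?s' d = Wait"
      by (simp add: id_less_def)
  qed
qed

lemma work_local_min_join:
  assumes inv: "work_local_min V E s" and c_work: "fstate s c = Work"
    and c_adj: "adj_frag V E s c d"
  shows "work_local_min V E (s\<lparr>cand := (\<lambda>v. if cand s v = c then d else cand s v)\<rparr>)"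
    (is "work_local_min V E ?s'")
  unfolding work_local_min_def
proof (intro allI impI, elim conjE)
  fix a b
  assume a_work: "fstate ?s' a = Work" and adj': "adj_frag V E ?s' a b"
  have d_wait: "fstate s d = Wait"
    using inv c_work c_adj unfolding work_local_min_def by blast
  have c_frag: "cand s c = c" and d_frag: "is_frag V s d" and "c \<noteq> d"
    using c_adj by (auto simp: adj_frag_def is_frag_def)
  have a_ne: "a \<noteq> c" "a \<noteq> d"
    using adj' a_work d_wait c_frag \<open>c \<noteq> d\<close> by (auto simp: adj_frag_def is_frag_def)
  have a_frag: "is_frag V s a"
    using adj' a_ne by (auto simp: adj_frag_def is_frag_def split: if_splits)
  have b_frag: "is_frag V s b"
    using adj' d_frag c_frag by (auto simp: adj_frag_def is_frag_def split: if_splits)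
  obtain u v where uv: "(u, v) \<in> E" "cand ?s' u = a" "cand ?s' v = b" "a \<noteq> b"
    using adj' by (auto simp: adj_frag_def)
  have u_in_a: "cand s u = a"
    using uv a_ne by (auto split: if_splits)
  have "cand s v \<noteq> c"
  proof
    assume "cand s v = c"
    then have "adj_frag V E s a c"
      using uv u_in_a a_frag a_ne c_adj unfolding adj_frag_def by auto
    with inv a_work c_work show False
      unfolding work_local_min_def by auto
  qed
  then have "adj_frag V E s a b"
    using uv u_in_a a_frag b_frag unfolding adj_frag_def by auto
  with inv a_work show "id_less ?s' a b \<and> fstate ?s' b = Wait"
    unfolding work_local_min_def by (auto simp: id_less_def)
qed

lemma step_preserves_work_local_min:
  assumes "step V E X s s'" "work_local_min V E s" "sym E"
  shows "work_local_min V E s'"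
  using assms(1)
proof cases
  case (start_work c)
  then show ?thesis
    using work_local_min_start_work assms(2,3) by blast
next
  case (remain_active c d)
  then show ?thesis
    using work_local_min_remain_active assms(2) by blast
next
  case (join c d)
  then show ?thesis
    using work_local_min_join assms(2) by blast
qed

lemma step_preserves_cand_retract:
  assumes "step V E X s s'" "cand_retract V s"
  shows "cand_retract V s'"
  using assms(1)
proof cases
  case (join c d)
  then show ?thesis
    using assms(2) unfolding cand_retract_def by (auto simp: adj_frag_def is_frag_def)
qed (use assms(2) in \<open>auto simp: cand_retract_def\<close>)

lemma step_same_fragment:
  "step V E X s s' \<Longrightarrow> cand s v = cand s w \<Longrightarrow> cand s' v = cand s' w"
  by (induction rule: step.cases) auto

lemma step_keeps_waiting_fragment:
  "step V E X s s' \<Longrightarrow> fstate s c = Wait \<Longrightarrow> cand s v = c \<Longrightarrow> cand s' v = c"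
  by (induction rule: step.cases) auto

lemma step_to_work_imp_local_min:
  "step V E X s s' \<Longrightarrow> fstate s c = Wait \<Longrightarrow> fstate s' c = Work
    \<Longrightarrow> \<forall>d. adj_frag V E s c d \<longrightarrow> id_less s c d"
  by (induction rule: step.cases) (auto split: if_splits)

lemma fragment_beside_local_min_waits:
  assumes inv: "work_local_min V E s" "cand_retract V s" "sym E"
    and edge: "(u, w) \<in> E" "u \<in> V" "w \<in> V"
    and c: "cand s u = c" "fstate s c = Wait"
    and c_min: "\<forall>d. adj_frag V E s c d \<longrightarrow> id_less s c d"
  shows "fstate s (cand s w) = Wait"
proof (cases "cand s w = c")
  case False
  with inv(2) edge c have "adj_frag V E s c (cand s w)"
    unfolding cand_retract_def adj_frag_def is_frag_def by metis
  then show ?thesis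
    using neighbour_of_local_min_waits[OF inv(1,3) c_min] by blast
qed (use c in simp)

lemma ex_least_nat_less_from:
  fixes p :: "nat \<Rightarrow> bool"
  assumes "\<not> p i" "p j" "i < j"
  shows "\<exists>t. i \<le> t \<and> t < j \<and> (\<forall>n. i \<le> n \<longrightarrow> n \<le> t \<longrightarrow> \<not> p n) \<and> p (Suc t)"
proof -
  obtain m where "m < j - i" "\<forall>k \<le> m. \<not> p (i + k)" "p (Suc (i + m))"
    using ex_least_nat_less[of "\<lambda>k. p (i + k)" "j - i"] assms by auto
  moreover have "\<not> p n" if "i \<le> n" "n \<le> i + m" for n
    using \<open>\<forall>k \<le> m. \<not> p (i + k)\<close>[rule_format, of "n - i"] that by simp
  ultimately show ?thesis
    by (intro exI[of _ "i + m"]) auto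
qed

lemma run_work_local_min_cand_retract:
  assumes "initial (run 0)" "\<forall>t < j. step V E X (run t) (run (Suc t))" "sym E" "n \<le> j"
  shows "work_local_min V E (run n) \<and> cand_retract V (run n)"
  using assms(4)
proof (induction n)
  case 0
  then show ?case
    using assms(1) by (auto simp: initial_def work_local_min_def cand_retract_def)
next
  case (Suc n)
  then have "step V E X (run n) (run (Suc n))"
    and "work_local_min V E (run n) \<and> cand_retract V (run n)"
    using assms(2) by simp_all
  then show ?case
    using step_preserves_work_local_min[OF _ _ \<open>sym E\<close>] step_preserves_cand_retract by blast
qed

lemma run_same_fragment:
  assumes "\<forall>n < j. step V E X (run n) (run (Suc n))" "i \<le> t" "t \<le> j"
    and "cand (run i) v = cand (run i) w"
  shows "cand (run t) v = cand (run t) w"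
  using assms(2,3)
proof (induction t rule: dec_induct)
  case (step n)
  then have "step V E X (run n) (run (Suc n))"
    using assms(1) by simp
  with step show ?case
    using step_same_fragment by simp
qed (use assms(4) in simp)

lemma run_keeps_waiting_fragment:
  assumes "\<forall>n < j. step V E X (run n) (run (Suc n))" "i \<le> t" "t \<le> j"
    and "\<forall>n. i \<le> n \<longrightarrow> n < t \<longrightarrow> fstate (run n) c = Wait" "cand (run i) u = c"
  shows "cand (run t) u = c"
  using assms(2,3)
proof (induction t rule: dec_induct)
  case (step n)
  then have "step V E X (run n) (run (Suc n))" "fstate (run n) c = Wait"
    using assms(1,4) by simp_all
  with step show ?case
    using step_keeps_waiting_fragment by simp
qed (use assms(5) in simp)

theorem corollary4:
  fixes V :: "'v::linorder set" and E :: "('v \<times> 'v) set" and X :: real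
    and run :: "nat \<Rightarrow> 'v config" and F F' :: 'v and i j :: nat
  assumes graph: "connected_graph V E"
    and X: "X > 1"
    and init: "initial (run 0)"
    and steps: "\<forall>t < j. step V E X (run t) (run (Suc t))"
    and F_wait: "is_frag V (run i) F" "fstate (run i) F = Wait"
    and F'_work: "is_frag V (run i) F'" "fstate (run i) F' = Work"
    and nbr: "adj_frag V E (run i) F F'"
    and ij: "i < j"
    and F_work_later: "is_frag V (run j) F" "fstate (run j) F = Work"
  shows "\<exists>k. i < k \<and> k < j \<and>
           (\<forall>v \<in> members V (run i) F'. fstate (run k) (cand (run k) v) = Wait)"
proof -
  have "sym E" and "E \<subseteq> V \<times> V"
    using graph by (auto simp: connected_graph_def)
  obtain t where "i \<le> t" "t < j" and F_waits: "\<forall>n. i \<le> n \<longrightarrow> n \<le> t \<longrightarrow> fstate (run n) F = Wait"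
    and "fstate (run (Suc t)) F = Work"
    using ex_least_nat_less_from[of "\<lambda>n. fstate (run n) F = Work" i j] F_wait(2) F_work_later(2) ij
    by auto
  then have F_min: "\<forall>d. adj_frag V E (run t) F d \<longrightarrow> id_less (run t) F d"
    using step_to_work_imp_local_min steps by blast
  obtain u w where uw: "(u, w) \<in> E" "cand (run i) u = F" "cand (run i) w = F'"
    using nbr by (auto simp: adj_frag_def)
  have same_as_w: "\<forall>v \<in> members V (run i) F'. cand (run t) v = cand (run t) w"
    using run_same_fragment[OF steps \<open>i \<le> t\<close>] \<open>t < j\<close> uw(3) by (simp add: members_def)
  have u_in_F: "cand (run t) u = F"
    using run_keeps_waiting_fragment[OF steps \<open>i \<le> t\<close>] \<open>t < j\<close> F_waits uw(2) by simp
  have "u \<in> V" "w \<in> V"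
    using uw(1) \<open>E \<subseteq> V \<times> V\<close> by auto
  moreover have "work_local_min V E (run t)" "cand_retract V (run t)"
    using run_work_local_min_cand_retract[OF init steps \<open>sym E\<close>, of t] \<open>t < j\<close> by auto
  ultimately have "fstate (run t) (cand (run t) w) = Wait"
    using fragment_beside_local_min_waits[OF _ _ \<open>sym E\<close> uw(1)] u_in_F F_waits \<open>i \<le> t\<close> F_min
    by blast
  moreover have "t \<noteq> i"
    using calculation F'_work uw by auto
  ultimately show ?thesis
    using \<open>i \<le> t\<close> \<open>t < j\<close> same_as_w by (intro exI[of _ t]) auto
qed

end
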